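(* Let $\mathcal{F}_2$ be the ($5$-dimensional) space of framed $2$-gons and let $\mathcal D$ be the distribution on $\mathcal{F}_2$ consisting of those infinitesimal motions for which the velocity of $B_1$ is parallel to $u_1$ and the velocity of $B_2$ is parallel to $u_2$. Then $\mathcal D$ is bracket generating of type $(3,5)$: it has rank $3$, and at every point of $\mathcal{F}_2$ the values of vector fields tangent to $\mathcal D$ together with their first commutators span the tangent space of $\mathcal F_2$.
   Context: For nonzero vectors $u,v$ in the plane, $\angle(u,v)\in\mathbb{R}/2\pi\mathbb{Z}$ is the angle through which $u$ must be rotated counterclockwise to align with $v$. A framed $2$-gon is a segment $B_1B_2$ with $B_1\neq B_2$ together with unit vectors $u_1$ at $B_1$ and $u_2$ at $B_2$ such that $\angle(u_1,B_2-B_1)=\angle(B_2-B_1,u_2)$; the framings $(u_1,u_2)$ and $(-u_1,-u_2)$ are identified. $\mathcal{F}_2$ is the space of framed $2$-gons; it has coordinates $(x,y,\varphi,r,\alpha)$, where $(x,y)$ is the midpoint of $B_1B_2$, $\varphi$ its direction, $r>0$ its half-length, and $\alpha$ the angle the framing vectors make with the segment. *)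

theory Defs
  imports "HOL-Analysis.Analysis"
begin

text \<open>We work on the open set
  of coordinates with r > 0 (the universal-cover chart of F_2; phi is
  taken mod 2pi and alpha mod pi in F_2 itself, which is irrelevant for
  the pointwise, local statement).\<close>

type_synonym pt5 = "real \<times> real \<times> real \<times> real \<times> real"

definition F2coords :: "pt5 set" where
  "F2coords = {(x, y, phi, r, alpha). r > 0}"

definition vertB1 :: "pt5 \<Rightarrow> complex" where
  "vertB1 = (\<lambda>(x, y, phi, r, alpha). Complex x y - complex_of_real r * cis phi)"

definition vertB2 :: "pt5 \<Rightarrow> complex" where
  "vertB2 = (\<lambda>(x, y, phi, r, alpha). Complex x y + complex_of_real r * cis phi)"

text \<open>Framing vectors: u1 is obtained from the direction of B2 - B1 by rotating
  clockwise by alpha, u2 by rotating counterclockwise by alpha, so that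
  angle(u1, B2 - B1) = alpha = angle(B2 - B1, u2).\<close>

definition frame1 :: "pt5 \<Rightarrow> complex" where
  "frame1 = (\<lambda>(x, y, phi, r, alpha). cis (phi - alpha))"

definition frame2 :: "pt5 \<Rightarrow> complex" where
  "frame2 = (\<lambda>(x, y, phi, r, alpha). cis (phi + alpha))"

definition distD :: "pt5 \<Rightarrow> pt5 set" where
  "distD p = {v. (\<exists>a::real. frechet_derivative vertB1 (at p) v = a *\<^sub>R frame1 p) \<and>
                 (\<exists>b::real. frechet_derivative vertB2 (at p) v = b *\<^sub>R frame2 p)}"

fun Ck_on :: "nat \<Rightarrow> ('a::real_normed_vector \<Rightarrow> 'b::real_normed_vector) \<Rightarrow> 'a set \<Rightarrow> bool" where
  "Ck_on 0 f S = continuous_on S f"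
| "Ck_on (Suc k) f S = (\<exists>f'. (\<forall>x\<in>S. (f has_derivative f' x) (at x)) \<and>
                           (\<forall>v. Ck_on k (\<lambda>x. f' x v) S))"

definition smooth_on :: "('a::real_normed_vector \<Rightarrow> 'b::real_normed_vector) \<Rightarrow> 'a set \<Rightarrow> bool" where
  "smooth_on f S = (\<forall>k. Ck_on k f S)"

definition tangent_field :: "(pt5 \<Rightarrow> pt5) \<Rightarrow> bool" where
  "tangent_field X = (smooth_on X F2coords \<and> (\<forall>p\<in>F2coords. X p \<in> distD p))"

definition lie_bracket :: "(pt5 \<Rightarrow> pt5) \<Rightarrow> (pt5 \<Rightarrow> pt5) \<Rightarrow> pt5 \<Rightarrow> pt5" where
  "lie_bracket X Y p = frechet_derivative Y (at p) (X p) - frechet_derivative X (at p) (Y p)"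

end

theory Submission
  imports Defs
begin

(* Rotating by e^{-i phi}, the two parallelism conditions defining D become two independent
   linear equations, so D is spanned by three explicit fields Dfield1, Dfield2 and
   Dfield3 = d/d alpha.  As Dfield3 is constant, [Dfield3, Dfieldi] is the alpha-derivative of
   Dfieldi.  In the rotated frame, Dfield1 and [Dfield3, Dfield1] span the plane of the
   along-segment and phi directions, Dfield2 and [Dfield3, Dfield2] that of the normal and r
   directions (for r > 0), so these five vectors span the tangent space; since the two brackets
   add at most two dimensions, D has rank 3. *)

lemma Ck_on_const: "Ck_on k (\<lambda>x. c) S"
proof (induction k arbitrary: c)
  case 0
  then show ?case by simp
next
  case (Suc k)
  then show ?case by (auto intro!: exI[of _ "\<lambda>x v. 0"])
qed

lemma Ck_on_bounded_linear: "bounded_linear l \<Longrightarrow> Ck_on k l S"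
  by (cases k) (auto intro!: exI[of _ "\<lambda>x. l"] Ck_on_const bounded_linear_imp_has_derivative
      linear_continuous_on)

lemma Ck_on_Suc_imp: "Ck_on (Suc k) f S \<Longrightarrow> Ck_on k f S"
proof (induction k arbitrary: f)
  case 0
  then show ?case
    by (auto intro!: continuous_at_imp_continuous_on dest: has_derivative_continuous)
next
  case (Suc k)
  then show ?case by (metis Ck_on.simps(2))
qed

lemma Ck_on_add: "Ck_on k f S \<Longrightarrow> Ck_on k g S \<Longrightarrow> Ck_on k (\<lambda>x. f x + g x) S"
proof (induction k arbitrary: f g)
  case 0
  then show ?case by (simp add: continuous_on_add)
next
  case (Suc k)
  then obtain f' g' where
    "\<forall>x\<in>S. (f has_derivative f' x) (at x)" "\<forall>v. Ck_on k (\<lambda>x. f' x v) S"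
    "\<forall>x\<in>S. (g has_derivative g' x) (at x)" "\<forall>v. Ck_on k (\<lambda>x. g' x v) S"
    by auto
  with Suc.IH show ?case
    by (auto intro!: exI[of _ "\<lambda>x v. f' x v + g' x v"] has_derivative_add)
qed

lemma Ck_on_mult:
  fixes f g :: "'a::real_normed_vector \<Rightarrow> real"
  shows "Ck_on k f S \<Longrightarrow> Ck_on k g S \<Longrightarrow> Ck_on k (\<lambda>x. f x * g x) S"
proof (induction k arbitrary: f g)
  case 0
  then show ?case by (simp add: continuous_on_mult)
next
  case (Suc k)
  then obtain f' g' where
    "\<forall>x\<in>S. (f has_derivative f' x) (at x)" "\<forall>v. Ck_on k (\<lambda>x. f' x v) S"
    "\<forall>x\<in>S. (g has_derivative g' x) (at x)" "\<forall>v. Ck_on k (\<lambda>x. g' x v) S"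
    by auto
  moreover have "Ck_on k f S" "Ck_on k g S"
    using Suc.prems Ck_on_Suc_imp by blast+
  ultimately show ?case
    by (auto intro!: exI[of _ "\<lambda>x v. f x * g' x v + f' x v * g x"] has_derivative_mult
        Ck_on_add Suc.IH)
qed

lemma Ck_on_minus:
  fixes f :: "'a::real_normed_vector \<Rightarrow> real"
  shows "Ck_on k f S \<Longrightarrow> Ck_on k (\<lambda>x. - f x) S"
  using Ck_on_mult[OF Ck_on_const[of k "-1"], of f S] by simp

lemma Ck_on_sin_cos:
  fixes f :: "'a::real_normed_vector \<Rightarrow> real"
  shows "Ck_on k f S \<Longrightarrow> Ck_on k (\<lambda>x. sin (f x)) S \<and> Ck_on k (\<lambda>x. cos (f x)) S"
proof (induction k arbitrary: f)
  case 0
  then show ?case by (auto intro!: continuous_on_sin continuous_on_cos)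
next
  case (Suc k)
  then obtain f' where
    f': "\<forall>x\<in>S. (f has_derivative f' x) (at x)" "\<forall>v. Ck_on k (\<lambda>x. f' x v) S"
    by auto
  have "Ck_on k (\<lambda>x. sin (f x)) S" "Ck_on k (\<lambda>x. cos (f x)) S"
    using Suc Ck_on_Suc_imp by blast+
  with f' have "Ck_on (Suc k) (\<lambda>x. sin (f x)) S"
    by (auto intro!: exI[of _ "\<lambda>x v. cos (f x) * f' x v"] derivative_eq_intros Ck_on_mult
        simp: fun_eq_iff mult.commute)
  moreover from f' \<open>Ck_on k (\<lambda>x. sin (f x)) S\<close> have "Ck_on (Suc k) (\<lambda>x. cos (f x)) S"
    by (auto intro!: exI[of _ "\<lambda>x v. - sin (f x) * f' x v"] derivative_eq_intros Ck_on_mult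
        Ck_on_minus simp: fun_eq_iff mult.commute)
  ultimately show ?case ..
qed

lemma Ck_on_sin:
  fixes f :: "'a::real_normed_vector \<Rightarrow> real"
  shows "Ck_on k f S \<Longrightarrow> Ck_on k (\<lambda>x. sin (f x)) S"
  using Ck_on_sin_cos by blast

lemma Ck_on_cos:
  fixes f :: "'a::real_normed_vector \<Rightarrow> real"
  shows "Ck_on k f S \<Longrightarrow> Ck_on k (\<lambda>x. cos (f x)) S"
  using Ck_on_sin_cos by blast

lemma Ck_on_Pair: "Ck_on k f S \<Longrightarrow> Ck_on k g S \<Longrightarrow> Ck_on k (\<lambda>x. (f x, g x)) S"
proof (induction k arbitrary: f g)
  case 0
  then show ?case by (simp add: continuous_on_Pair)
next
  case (Suc k)
  then obtain f' g' where
    "\<forall>x\<in>S. (f has_derivative f' x) (at x)" "\<forall>v. Ck_on k (\<lambda>x. f' x v) S"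
    "\<forall>x\<in>S. (g has_derivative g' x) (at x)" "\<forall>v. Ck_on k (\<lambda>x. g' x v) S"
    by auto
  with Suc.IH show ?case
    by (auto intro!: exI[of _ "\<lambda>x v. (f' x v, g' x v)"] has_derivative_Pair)
qed

lemma has_derivative_Complex:
  assumes "(f has_derivative f') F" "(g has_derivative g') F"
  shows "((\<lambda>q. Complex (f q) (g q)) has_derivative (\<lambda>v. Complex (f' v) (g' v))) F"
  unfolding Complex_eq by (intro derivative_intros assms)

lemma ex_scaleR_cis_iff: "(\<exists>a::real. z = a *\<^sub>R cis t) \<longleftrightarrow> Re z * sin t = Im z * cos t"
proof
  assume parallel: "Re z * sin t = Im z * cos t"
  have "Re z = (Re z * cos t + Im z * sin t) * cos t" "Im z = (Re z * cos t + Im z * sin t) * sin t"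
    using parallel sin_cos_squared_add[of t] by algebra+
  then have "z = (Re z * cos t + Im z * sin t) *\<^sub>R cis t"
    by (simp add: complex_eq_iff scaleR_conv_of_real)
  then show "\<exists>a::real. z = a *\<^sub>R cis t" ..
qed (auto simp: scaleR_conv_of_real)

lemma frechet_derivative_vertex:
  "frechet_derivative (\<lambda>(x, y, ph, r, al). Complex x y + complex_of_real (\<sigma> * r) * cis ph)
     (at (x, y, ph, r, al)) (dx, dy, dph, dr, dal) =
   Complex (dx + \<sigma> * (dr * cos ph - r * sin ph * dph)) (dy + \<sigma> * (dr * sin ph + r * cos ph * dph))"
proof -
  have eq: "(\<lambda>(x, y, ph, r, al). Complex x y + complex_of_real (\<sigma> * r) * cis ph) =
        (\<lambda>q. Complex (fst q + \<sigma> * fst (snd (snd (snd q))) * cos (fst (snd (snd q))))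
                      (fst (snd q) + \<sigma> * fst (snd (snd (snd q))) * sin (fst (snd (snd q)))))"
    (is "_ = ?F") by (auto simp: fun_eq_iff complex_eq_iff)
  have d: "(?F has_derivative (\<lambda>v. Complex
       (fst v + \<sigma> * (fst (snd (snd (snd v))) * cos ph - r * sin ph * fst (snd (snd v))))
       (fst (snd v) + \<sigma> * (fst (snd (snd (snd v))) * sin ph + r * cos ph * fst (snd (snd v))))))
      (at (x, y, ph, r, al))"
    by (rule has_derivative_Complex; auto intro!: derivative_eq_intros simp: fun_eq_iff algebra_simps)
  show ?thesis
    unfolding eq frechet_derivative_at[OF d, symmetric] by simp
qed

lemma mem_distD_iff:
  "(dx, dy, dph, dr, dal) \<in> distD (x, y, ph, r, al) \<longleftrightarrow>
     cos al * (dy * cos ph - dx * sin ph) = sin al * dr \<and>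
     sin al * (dx * cos ph + dy * sin ph) = r * cos al * dph"
proof -
  have "frechet_derivative vertB1 (at (x, y, ph, r, al)) (dx, dy, dph, dr, dal) =
        Complex (dx - (dr * cos ph - r * sin ph * dph)) (dy - (dr * sin ph + r * cos ph * dph))"
    using frechet_derivative_vertex[of "-1" x y ph r al dx dy dph dr dal]
    by (simp add: vertB1_def algebra_simps)
  moreover have "frechet_derivative vertB2 (at (x, y, ph, r, al)) (dx, dy, dph, dr, dal) =
        Complex (dx + (dr * cos ph - r * sin ph * dph)) (dy + (dr * sin ph + r * cos ph * dph))"
    using frechet_derivative_vertex[of 1 x y ph r al dx dy dph dr dal]
    by (simp add: vertB2_def)
  ultimately have "(dx, dy, dph, dr, dal) \<in> distD (x, y, ph, r, al) \<longleftrightarrow>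
      (dx - (dr * cos ph - r * sin ph * dph)) * sin (ph - al) =
        (dy - (dr * sin ph + r * cos ph * dph)) * cos (ph - al) \<and>
      (dx + (dr * cos ph - r * sin ph * dph)) * sin (ph + al) =
        (dy + (dr * sin ph + r * cos ph * dph)) * cos (ph + al)"
    by (simp add: distD_def frame1_def frame2_def ex_scaleR_cis_iff)
  also have "\<dots> \<longleftrightarrow> cos al * (dy * cos ph - dx * sin ph) = sin al * dr \<and>
      sin al * (dx * cos ph + dy * sin ph) = r * cos al * dph"
  proof -
    let ?P = "cos al * (dy * cos ph - dx * sin ph) - sin al * dr"
    let ?Q = "sin al * (dx * cos ph + dy * sin ph) - r * cos al * dph"
    have "(dx - (dr * cos ph - r * sin ph * dph)) * sin (ph - al)
          - (dy - (dr * sin ph + r * cos ph * dph)) * cos (ph - al) = - ?P - ?Q"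
      "(dx + (dr * cos ph - r * sin ph * dph)) * sin (ph + al)
          - (dy + (dr * sin ph + r * cos ph * dph)) * cos (ph + al) = - ?P + ?Q"
      unfolding sin_diff cos_diff sin_add cos_add using sin_cos_squared_add[of ph] by algebra+
    then show ?thesis by linarith
  qed
  finally show ?thesis .
qed

lemma subspace_distD: "subspace (distD p)"
proof -
  obtain x y ph r al where p: "p = (x, y, ph, r, al)" by (cases p)
  define L :: "pt5 \<Rightarrow> real \<times> real" where
    "L = (\<lambda>(dx, dy, dph, dr, dal). (cos al * (dy * cos ph - dx * sin ph) - sin al * dr,
                                    sin al * (dx * cos ph + dy * sin ph) - r * cos al * dph))"
  have "linear L"
    by (rule linearI) (auto simp: L_def algebra_simps)
  moreover have "distD p = {v. L v = 0}"
    by (auto simp: p L_def mem_distD_iff zero_prod_def)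
  ultimately show ?thesis by (simp add: linear_subspace_kernel)
qed

definition Dfield1 :: "pt5 \<Rightarrow> pt5" where
  "Dfield1 = (\<lambda>(x, y, ph, r, al). (r * cos al * cos ph, r * cos al * sin ph, sin al, 0, 0))"

definition Dfield2 :: "pt5 \<Rightarrow> pt5" where
  "Dfield2 = (\<lambda>(x, y, ph, r, al). (- sin al * sin ph, sin al * cos ph, 0, cos al, 0))"

definition Dfield3 :: "pt5 \<Rightarrow> pt5" where
  "Dfield3 = (\<lambda>_. (0, 0, 0, 0, 1))"

lemma Dfield_in_distD: "Dfield1 p \<in> distD p" "Dfield2 p \<in> distD p" "Dfield3 p \<in> distD p"
proof -
  obtain x y ph r al where p: "p = (x, y, ph, r, al)" by (cases p)
  have trig: "cos ph * cos ph + sin ph * sin ph = 1" by simp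
  show "Dfield1 p \<in> distD p"
    by (simp add: p Dfield1_def mem_distD_iff) (intro disjI2, use trig in algebra)
  show "Dfield2 p \<in> distD p"
    by (simp add: p Dfield2_def mem_distD_iff) (intro disjI2, use trig in algebra)
  show "Dfield3 p \<in> distD p"
    by (simp add: p Dfield3_def mem_distD_iff)
qed

lemma smooth_Dfield: "smooth_on Dfield1 S" "smooth_on Dfield2 S" "smooth_on Dfield3 S"
  unfolding smooth_on_def Dfield1_def Dfield2_def Dfield3_def case_prod_beta
  by (intro allI Ck_on_Pair Ck_on_mult Ck_on_minus Ck_on_sin Ck_on_cos Ck_on_const
      Ck_on_bounded_linear bounded_linear_fst_comp bounded_linear_snd_comp bounded_linear_ident)+

lemma lie_bracket_const_left: "lie_bracket (\<lambda>_. c) Y p = frechet_derivative Y (at p) c"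
  by (simp add: lie_bracket_def)

lemma lie_bracket_Dfield3_Dfield1:
  "lie_bracket Dfield3 Dfield1 (x, y, ph, r, al) =
     (- r * sin al * cos ph, - r * sin al * sin ph, cos al, 0, 0)"
proof -
  have "(Dfield1 has_derivative (\<lambda>v.
      (fst (snd (snd (snd v))) * cos al * cos ph - r * sin al * snd (snd (snd (snd v))) * cos ph
         - r * cos al * sin ph * fst (snd (snd v)),
       fst (snd (snd (snd v))) * cos al * sin ph - r * sin al * snd (snd (snd (snd v))) * sin ph
         + r * cos al * cos ph * fst (snd (snd v)),
       cos al * snd (snd (snd (snd v))), 0, 0))) (at (x, y, ph, r, al))"
    unfolding Dfield1_def case_prod_beta
    by (auto intro!: derivative_eq_intros simp: fun_eq_iff algebra_simps zero_prod_def)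
  then show ?thesis
    by (simp add: Dfield3_def lie_bracket_const_left frechet_derivative_at[symmetric])
qed

lemma lie_bracket_Dfield3_Dfield2:
  "lie_bracket Dfield3 Dfield2 (x, y, ph, r, al) =
     (- cos al * sin ph, cos al * cos ph, 0, - sin al, 0)"
proof -
  have "(Dfield2 has_derivative (\<lambda>v.
      (- cos al * snd (snd (snd (snd v))) * sin ph - sin al * cos ph * fst (snd (snd v)),
       cos al * snd (snd (snd (snd v))) * cos ph - sin al * sin ph * fst (snd (snd v)),
       0, - sin al * snd (snd (snd (snd v))), 0))) (at (x, y, ph, r, al))"
    unfolding Dfield2_def case_prod_beta
    by (auto intro!: derivative_eq_intros simp: fun_eq_iff algebra_simps zero_prod_def)
  then show ?thesis
    by (simp add: Dfield3_def lie_bracket_const_left frechet_derivative_at[symmetric])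
qed

(* The coefficients of the two brackets are the linear forms cutting out D, so they vanish
   exactly on D. *)
lemma decompose_Dfield_brackets:
  fixes x y ph r al dx dy dph dr dal :: real
  defines "a \<equiv> dx * cos ph + dy * sin ph" and "b \<equiv> dy * cos ph - dx * sin ph"
  assumes "r \<noteq> 0"
  shows "(dx, dy, dph, dr, dal) =
           (cos al * a / r + sin al * dph) *\<^sub>R Dfield1 (x, y, ph, r, al)
         + (sin al * b + cos al * dr) *\<^sub>R Dfield2 (x, y, ph, r, al)
         + dal *\<^sub>R Dfield3 (x, y, ph, r, al)
         + ((r * cos al * dph - sin al * a) / r) *\<^sub>R lie_bracket Dfield3 Dfield1 (x, y, ph, r, al)
         + (cos al * b - sin al * dr) *\<^sub>R lie_bracket Dfield3 Dfield2 (x, y, ph, r, al)"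
proof -
  define m1 where "m1 = cos al * a / r + sin al * dph"
  define m2 where "m2 = (r * cos al * dph - sin al * a) / r"
  have m: "r * m1 = cos al * a + r * sin al * dph" "r * m2 = r * cos al * dph - sin al * a"
    using \<open>r \<noteq> 0\<close> by (simp_all add: m1_def m2_def field_simps)
  have trig: "cos ph ^ 2 + sin ph ^ 2 = 1" "cos al ^ 2 + sin al ^ 2 = 1" by simp_all
  have "r * dph = r * (m1 * sin al + m2 * cos al)"
    using m trig unfolding a_def by algebra
  then have "dph = m1 * sin al + m2 * cos al"
    using \<open>r \<noteq> 0\<close> by simp
  moreover have "dx = m1 * (r * cos al * cos ph) - m2 * (r * sin al * cos ph)
      + (sin al * b + cos al * dr) * (- sin al * sin ph) - (cos al * b - sin al * dr) * (cos al * sin ph)"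
    "dy = m1 * (r * cos al * sin ph) - m2 * (r * sin al * sin ph)
      + (sin al * b + cos al * dr) * (sin al * cos ph) + (cos al * b - sin al * dr) * (cos al * cos ph)"
    "dr = (sin al * b + cos al * dr) * cos al - (cos al * b - sin al * dr) * sin al"
    using m trig unfolding a_def b_def by algebra+
  ultimately show ?thesis
    unfolding lie_bracket_Dfield3_Dfield1 lie_bracket_Dfield3_Dfield2
      m1_def[symmetric] m2_def[symmetric]
    by (simp add: Dfield1_def Dfield2_def Dfield3_def)
qed

lemma F2coords_cases:
  assumes "p \<in> F2coords"
  obtains x y ph r al where "p = (x, y, ph, r, al)" "r \<noteq> 0"
  using assms by (cases p) (auto simp: F2coords_def)

lemma distD_eq_span_Dfield:
  assumes "p \<in> F2coords"
  shows "distD p = span {Dfield1 p, Dfield2 p, Dfield3 p}"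
proof
  show "span {Dfield1 p, Dfield2 p, Dfield3 p} \<subseteq> distD p"
    by (intro span_minimal subspace_distD) (simp add: Dfield_in_distD)
next
  obtain x y ph r al where p: "p = (x, y, ph, r, al)" and "r \<noteq> 0"
    using assms by (rule F2coords_cases)
  show "distD p \<subseteq> span {Dfield1 p, Dfield2 p, Dfield3 p}"
  proof
    fix v assume "v \<in> distD p"
    moreover obtain dx dy dph dr dal where v: "v = (dx, dy, dph, dr, dal)" by (cases v)
    ultimately have "cos al * (dy * cos ph - dx * sin ph) - sin al * dr = 0"
      "r * cos al * dph - sin al * (dx * cos ph + dy * sin ph) = 0"
      by (simp_all add: p mem_distD_iff)
    then have "v = (cos al * (dx * cos ph + dy * sin ph) / r + sin al * dph) *\<^sub>R Dfield1 p
        + (sin al * (dy * cos ph - dx * sin ph) + cos al * dr) *\<^sub>R Dfield2 p + dal *\<^sub>R Dfield3 p"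
      using decompose_Dfield_brackets[OF \<open>r \<noteq> 0\<close>, of dx dy dph dr dal al ph x y]
      by (simp add: p v)
    then show "v \<in> span {Dfield1 p, Dfield2 p, Dfield3 p}"
      by (simp add: span_add span_scale span_base)
  qed
qed

lemma span_Dfield_brackets:
  assumes "p \<in> F2coords"
  shows "span {Dfield1 p, Dfield2 p, Dfield3 p,
               lie_bracket Dfield3 Dfield1 p, lie_bracket Dfield3 Dfield2 p} = UNIV"
proof -
  obtain x y ph r al where p: "p = (x, y, ph, r, al)" and "r \<noteq> 0"
    using assms by (rule F2coords_cases)
  have "v \<in> span {Dfield1 p, Dfield2 p, Dfield3 p,
               lie_bracket Dfield3 Dfield1 p, lie_bracket Dfield3 Dfield2 p}" for v
  proof -
    obtain dx dy dph dr dal where v: "v = (dx, dy, dph, dr, dal)" by (cases v)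
    show ?thesis
      unfolding v p decompose_Dfield_brackets[OF \<open>r \<noteq> 0\<close>, of dx dy dph dr dal al ph x y]
      by (simp add: span_add span_scale span_base)
  qed
  then show ?thesis by auto
qed

lemma dim_distD:
  assumes "p \<in> F2coords"
  shows "dim (distD p) = 3"
proof (rule antisym)
  have "dim (distD p) \<le> card {Dfield1 p, Dfield2 p, Dfield3 p}"
    unfolding distD_eq_span_Dfield[OF assms] by (rule dim_le_card) auto
  also have "\<dots> \<le> 3"
    by (simp add: card_insert_if)
  finally show "dim (distD p) \<le> 3" .
  have "5 = dim (span (insert (lie_bracket Dfield3 Dfield1 p)
                (insert (lie_bracket Dfield3 Dfield2 p) {Dfield1 p, Dfield2 p, Dfield3 p})))"
    using span_Dfield_brackets[OF assms] by (simp add: insert_commute)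
  also have "\<dots> \<le> dim {Dfield1 p, Dfield2 p, Dfield3 p} + 2"
    by (simp add: dim_insert)
  finally show "3 \<le> dim (distD p)"
    by (simp add: distD_eq_span_Dfield[OF assms])
qed

lemma tangent_field_Dfield: "tangent_field Dfield1" "tangent_field Dfield2" "tangent_field Dfield3"
  unfolding tangent_field_def using smooth_Dfield Dfield_in_distD by auto

theorem theorem5p1:
  shows "(\<forall>p\<in>F2coords. subspace (distD p) \<and> dim (distD p) = 3) \<and>
         (\<forall>p\<in>F2coords.
            span ({X p | X. tangent_field X} \<union>
                  {lie_bracket X Y p | X Y. tangent_field X \<and> tangent_field Y}) = UNIV)"
proof -
  have "span ({X p | X. tangent_field X} \<union>
              {lie_bracket X Y p | X Y. tangent_field X \<and> tangent_field Y}) = UNIV"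
    (is "span ?T = UNIV") if "p \<in> F2coords" for p
  proof -
    have "{Dfield1 p, Dfield2 p, Dfield3 p,
           lie_bracket Dfield3 Dfield1 p, lie_bracket Dfield3 Dfield2 p} \<subseteq> ?T"
      using tangent_field_Dfield by blast
    then have "span {Dfield1 p, Dfield2 p, Dfield3 p,
           lie_bracket Dfield3 Dfield1 p, lie_bracket Dfield3 Dfield2 p} \<subseteq> span ?T"
      by (rule span_mono)
    then show ?thesis
      unfolding span_Dfield_brackets[OF that] by blast
  qed
  then show ?thesis
    using subspace_distD dim_distD by blast
qed

end
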